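(* Let $F:\mathbb{R}^d\to\mathbb{R}\cup\{+\infty\}$ be convex with $e^{-F}$ integrable, let $F_\ast\coloneqq\inf F$ (attained at some $x_\ast$), and let $\pi\propto\exp(-F)$. 1. For all $\lambda\in(0,1)$, $\mathbb E_\pi\exp(\lambda(F-F_\ast))\le(1-\lambda)^{-d}$. 2. For all $\delta\in(0,1)$, $\pi\bigl(F-F_\ast\ge d+\sqrt{2d\log(1/\delta)}+\log(1/\delta)\bigr)\le\delta$. *)

theory Defs
  imports "HOL-Analysis.Analysis"
begin

text \<open>Convexity of an extended-valued function F : R^d -> R \<union> {+\<infinity>}
  (values in ereal; the value -\<infinity> is excluded separately by an assumption).\<close>
definition ereal_convex :: "('a::real_vector \<Rightarrow> ereal) \<Rightarrow> bool" where
  "ereal_convex F \<longleftrightarrow>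
     (\<forall>x y. \<forall>t::real. 0 < t \<and> t < 1 \<longrightarrow>
        F ((1 - t) *\<^sub>R x + t *\<^sub>R y) \<le> ereal (1 - t) * F x + ereal t * F y)"

definition gibbs_weight :: "('a \<Rightarrow> ereal) \<Rightarrow> 'a \<Rightarrow> real" where
  "gibbs_weight F x = (case F x of ereal r \<Rightarrow> exp (- r) | _ \<Rightarrow> 0)"

definition gibbs_Z :: "('a::euclidean_space \<Rightarrow> ereal) \<Rightarrow> real" where
  "gibbs_Z F = integral\<^sup>L lebesgue (gibbs_weight F)"

definition gibbs :: "('a::euclidean_space \<Rightarrow> ereal) \<Rightarrow> 'a measure" where
  "gibbs F = density lebesgue (\<lambda>x. ennreal (gibbs_weight F x / gibbs_Z F))"

definition exp_tilt :: "real \<Rightarrow> ('a \<Rightarrow> ereal) \<Rightarrow> real \<Rightarrow> 'a \<Rightarrow> ennreal" where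
  "exp_tilt l F c x = (case F x of ereal r \<Rightarrow> ennreal (exp (l * (r - c))) | _ \<Rightarrow> \<infinity>)"

end

theory Submission
  imports Defs
begin

text \<open>Write \<open>s = 1 - \<lambda>\<close>. Convexity gives \<open>F (s z + \<lambda> x\<^sub>*) \<le> s F z + \<lambda> F\<^sub>*\<close>, so
  \<open>exp (-\<lambda> F\<^sub>*) exp (-F)\<^sup>s\<close> is dominated by \<open>exp (-F)\<close> composed with the contraction
  \<open>z \<mapsto> s z + \<lambda> x\<^sub>*\<close> of Jacobian \<open>s\<^sup>d\<close>. Integrating, \<open>Z E\<^sub>\<pi> exp (\<lambda> (F - F\<^sub>*)) =
  \<integral> exp (-\<lambda> F\<^sub>*) exp (-F)\<^sup>s \<le> s\<^sup>-\<^sup>d Z\<close>, which is the moment bound. The tail bound is the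
  Chernoff bound with \<open>\<lambda> = 1 - d / t\<close>, the minimiser of \<open>(1 - \<lambda>)\<^sup>-\<^sup>d exp (-\<lambda> t)\<close>,
  at the level \<open>t = d + \<surd>(2 d L) + L\<close>, \<open>L = ln (1 / \<delta>)\<close>.\<close>

lemma nn_integral_lebesgue_affine:
  fixes f :: "'a::euclidean_space \<Rightarrow> ennreal" and c :: real and t :: 'a
  assumes f[measurable]: "f \<in> borel_measurable lebesgue" and c: "c \<noteq> 0"
  shows "(\<integral>\<^sup>+x. f x \<partial>lebesgue) = ennreal (\<bar>c\<bar> ^ DIM('a)) * (\<integral>\<^sup>+x. f (t + c *\<^sub>R x) \<partial>lebesgue)"
proof -
  have affine: "(\<lambda>x. t + (\<Sum>j\<in>Basis. (c * (x \<bullet> j)) *\<^sub>R j)) = (\<lambda>x::'a. t + c *\<^sub>R x)"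
    unfolding scaleR_scaleR[symmetric] scaleR_sum_right[symmetric] euclidean_representation by simp
  have eq: "lebesgue = density (distr lebesgue lebesgue (\<lambda>x::'a. t + c *\<^sub>R x)) (\<lambda>_. ennreal (\<bar>c\<bar> ^ DIM('a)))"
    using lebesgue_affine_euclidean[of "\<lambda>_. c" t] c unfolding affine by (simp add: prod_constant)
  have meas: "(\<lambda>x::'a. t + c *\<^sub>R x) \<in> lebesgue \<rightarrow>\<^sub>M lebesgue"
    using lebesgue_affine_measurable[of "\<lambda>_. c" t] c unfolding affine by simp
  have "(\<integral>\<^sup>+x. f x \<partial>lebesgue)
      = \<integral>\<^sup>+ x. ennreal (\<bar>c\<bar> ^ DIM('a)) * f x \<partial>distr lebesgue lebesgue (\<lambda>x. t + c *\<^sub>R x)"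
    by (subst eq, subst nn_integral_density) auto
  also have "\<dots> = ennreal (\<bar>c\<bar> ^ DIM('a)) * integral\<^sup>N (distr lebesgue lebesgue (\<lambda>x. t + c *\<^sub>R x)) f"
    using f measurable_distr_eq1 nn_integral_cmult by blast
  also have "\<dots> = ennreal (\<bar>c\<bar> ^ DIM('a)) * (\<integral>\<^sup>+x. f (t + c *\<^sub>R x) \<partial>lebesgue)"
    using meas by (subst nn_integral_distr) auto
  finally show ?thesis .
qed

lemma nn_integral_le_of_le_contraction:
  fixes f g :: "'a::euclidean_space \<Rightarrow> ennreal" and s :: real and t :: 'a
  assumes g: "g \<in> borel_measurable lebesgue" and s: "0 < s"
    and le: "\<And>z. f z \<le> g (t + s *\<^sub>R z)"
  shows "(\<integral>\<^sup>+z. f z \<partial>lebesgue) \<le> ennreal (s powr - real DIM('a)) * (\<integral>\<^sup>+y. g y \<partial>lebesgue)"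
proof -
  have cancel: "ennreal (s powr - real DIM('a)) * ennreal (s ^ DIM('a)) = 1"
    using s by (simp add: ennreal_mult'[symmetric] powr_realpow[symmetric] powr_add[symmetric])
  have "(\<integral>\<^sup>+z. f z \<partial>lebesgue)
      = ennreal (s powr - real DIM('a)) * (ennreal (s ^ DIM('a)) * (\<integral>\<^sup>+z. f z \<partial>lebesgue))"
    by (simp add: mult.assoc[symmetric] cancel)
  also have "\<dots> \<le> ennreal (s powr - real DIM('a)) *
      (ennreal (s ^ DIM('a)) * (\<integral>\<^sup>+z. g (t + s *\<^sub>R z) \<partial>lebesgue))"
    using le by (intro mult_left_mono nn_integral_mono) auto
  also have "\<dots> = ennreal (s powr - real DIM('a)) * (\<integral>\<^sup>+y. g y \<partial>lebesgue)"
    using nn_integral_lebesgue_affine[OF g, of s t] s by simp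
  finally show ?thesis .
qed

lemma gibbs_weight_nonneg: "0 \<le> gibbs_weight F x"
  by (cases "F x") (auto simp: gibbs_weight_def)

lemma gibbs_weight_mult_exp_tilt:
  "ennreal (gibbs_weight F x) * exp_tilt l F c x = ennreal (exp (- l * c) * gibbs_weight F x powr (1 - l))"
proof (cases "F x")
  case (real r)
  have "exp (- r) * exp (l * (r - c)) = exp (- l * c) * exp (- r) powr (1 - l)"
    by (simp add: powr_def exp_add[symmetric] algebra_simps)
  then show ?thesis
    using real by (simp add: gibbs_weight_def exp_tilt_def ennreal_mult[symmetric])
qed (simp_all add: gibbs_weight_def exp_tilt_def)

lemma exp_tilt_measurable:
  assumes no_minf: "\<And>x. F x \<noteq> - \<infinity>"
    and [measurable]: "gibbs_weight F \<in> borel_measurable lebesgue"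
  shows "exp_tilt l F c \<in> borel_measurable lebesgue"
proof -
  have "exp_tilt l F c x =
      (if gibbs_weight F x = 0 then \<infinity> else ennreal (exp (- l * c) * gibbs_weight F x powr (- l)))" for x
    using no_minf[of x]
    by (cases "F x") (simp_all add: exp_tilt_def gibbs_weight_def powr_def exp_add[symmetric] algebra_simps)
  then have "exp_tilt l F c =
      (\<lambda>x. if gibbs_weight F x = 0 then \<infinity> else ennreal (exp (- l * c) * gibbs_weight F x powr (- l)))"
    by blast
  also have "\<dots> \<in> borel_measurable lebesgue" by measurable
  finally show ?thesis .
qed

lemma gibbs_weight_powr_le_convex_comb:
  assumes no_minf: "\<And>x. F x \<noteq> - \<infinity>" and conv: "ereal_convex F"
    and c: "F xs = ereal c" and l: "0 < l" "l < 1"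
  shows "exp (- l * c) * gibbs_weight F z powr (1 - l) \<le> gibbs_weight F (l *\<^sub>R xs + (1 - l) *\<^sub>R z)"
proof (cases "F z")
  case (real r)
  have "F (l *\<^sub>R xs + (1 - l) *\<^sub>R z) \<le> ereal (1 - l) * F z + ereal l * F xs"
    using conv l unfolding ereal_convex_def by (metis add.commute)
  also have "\<dots> = ereal ((1 - l) * r + l * c)" using real c by simp
  finally obtain r' where r': "F (l *\<^sub>R xs + (1 - l) *\<^sub>R z) = ereal r'" "r' \<le> (1 - l) * r + l * c"
    using no_minf by (cases "F (l *\<^sub>R xs + (1 - l) *\<^sub>R z)") auto
  then have "exp (- l * c - (1 - l) * r) \<le> exp (- r')" by simp
  then show ?thesis
    using real r' by (simp add: gibbs_weight_def powr_def exp_add[symmetric] algebra_simps)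
qed (use no_minf in \<open>auto simp: gibbs_weight_def split: ereal.split\<close>)

lemma nn_integral_gibbs_exp_tilt_le:
  fixes F :: "'a::euclidean_space \<Rightarrow> ereal"
  assumes no_minf: "\<And>x. F x \<noteq> - \<infinity>" and conv: "ereal_convex F"
    and integ: "integrable lebesgue (gibbs_weight F)" and Zpos: "gibbs_Z F > 0"
    and c: "F xs = ereal c" and l: "0 < l" "l < 1"
  shows "(\<integral>\<^sup>+x. exp_tilt l F c x \<partial>gibbs F) \<le> ennreal ((1 - l) powr - real DIM('a))"
proof -
  define Z where "Z = gibbs_Z F"
  have g_meas[measurable]: "gibbs_weight F \<in> borel_measurable lebesgue"
    using integ by (rule borel_measurable_integrable)
  note [measurable] = exp_tilt_measurable[OF no_minf g_meas, of l c]
  have Z: "(\<integral>\<^sup>+x. ennreal (gibbs_weight F x) \<partial>lebesgue) = ennreal Z"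
    using integ by (simp add: Z_def gibbs_Z_def nn_integral_eq_integral gibbs_weight_nonneg)
  have "(\<integral>\<^sup>+x. exp_tilt l F c x \<partial>gibbs F)
      = (\<integral>\<^sup>+x. ennreal (gibbs_weight F x / Z) * exp_tilt l F c x \<partial>lebesgue)"
    unfolding gibbs_def Z_def by (rule nn_integral_density) measurable
  also have "\<dots> = (\<integral>\<^sup>+x. ennreal (1 / Z) *
      ennreal (exp (- l * c) * gibbs_weight F x powr (1 - l)) \<partial>lebesgue)"
  proof -
    have "ennreal (gibbs_weight F x / Z) = ennreal (1 / Z) * ennreal (gibbs_weight F x)" for x
      using Zpos by (simp add: Z_def gibbs_weight_nonneg ennreal_mult'[symmetric])
    then show ?thesis by (simp add: mult.assoc gibbs_weight_mult_exp_tilt)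
  qed
  also have "\<dots> = ennreal (1 / Z) *
      (\<integral>\<^sup>+x. ennreal (exp (- l * c) * gibbs_weight F x powr (1 - l)) \<partial>lebesgue)"
    by (rule nn_integral_cmult) measurable
  also have "\<dots> \<le> ennreal (1 / Z) * (ennreal ((1 - l) powr - real DIM('a)) * ennreal Z)"
    unfolding Z[symmetric]
    using gibbs_weight_powr_le_convex_comb[OF no_minf conv c l] l
    by (intro mult_left_mono nn_integral_le_of_le_contraction[where t = "l *\<^sub>R xs"])
      (auto intro: ennreal_leI)
  also have "\<dots> = ennreal ((1 - l) powr - real DIM('a))"
    using Zpos by (simp add: Z_def ennreal_mult'[symmetric])
  finally show ?thesis .
qed

lemma emeasure_le_exp_tilt_moment:
  assumes meas: "exp_tilt l F c \<in> borel_measurable M" and l: "0 \<le> l"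
  shows "emeasure M {x. ereal t \<le> F x - ereal c}
    \<le> (\<integral>\<^sup>+x. exp_tilt l F c x \<partial>M) * ennreal (exp (- l * t))"
proof -
  let ?A = "{x. ereal t \<le> F x - ereal c}"
  have ind: "indicator ?A x \<le> exp_tilt l F c x * ennreal (exp (- l * t))" for x
  proof (cases "F x")
    case (real r)
    show ?thesis
    proof (cases "x \<in> ?A")
      case True
      with real l have "l * t \<le> l * (r - c)" by (intro mult_left_mono) auto
      then have "1 \<le> exp (l * (r - c)) * exp (- l * t)" by (simp add: exp_add[symmetric])
      then show ?thesis using True real by (simp add: exp_tilt_def ennreal_mult[symmetric])
    qed simp
  qed (simp_all add: exp_tilt_def indicator_def)
  have "emeasure M ?A \<le> (\<integral>\<^sup>+x. exp_tilt l F c x * ennreal (exp (- l * t)) \<partial>M)"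
  proof (cases "?A \<in> sets M")
    case True
    then have "emeasure M ?A = (\<integral>\<^sup>+x. indicator ?A x \<partial>M)" by simp
    also have "\<dots> \<le> (\<integral>\<^sup>+x. exp_tilt l F c x * ennreal (exp (- l * t)) \<partial>M)"
      by (intro nn_integral_mono ind)
    finally show ?thesis .
  qed (simp add: emeasure_notin_sets)
  also have "\<dots> = (\<integral>\<^sup>+x. exp_tilt l F c x \<partial>M) * ennreal (exp (- l * t))"
    using meas by (rule nn_integral_multc)
  finally show ?thesis .
qed

lemma Chernoff_level_bound:
  fixes d L :: real
  assumes d: "0 < d" and L: "0 \<le> L"
  defines "t \<equiv> d + sqrt (2 * d * L) + L"
  shows "(d / t) powr (- d) * exp (- (t - d)) \<le> exp (- L)"
proof -
  define a where "a = sqrt (2 * d * L) / d"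
  have a: "0 \<le> a" "a\<^sup>2 = 2 * L / d"
    using d L by (simp_all add: a_def power_divide power2_eq_square)
  have t: "0 < t" "t / d = 1 + a + a\<^sup>2 / 2"
    using d L a unfolding t_def
    by (simp_all add: add_pos_nonneg) (simp add: a_def field_simps power2_eq_square)
  \<comment> \<open>\<open>t / d\<close> is the quadratic Taylor polynomial of \<open>exp a\<close>\<close>
  have "ln (t / d) \<le> a"
    using exp_lower_Taylor_quadratic[OF a(1)] t d
    by (metis divide_pos_pos ln_exp ln_le_cancel_iff exp_gt_zero)
  then have "d * ln (t / d) \<le> sqrt (2 * d * L)"
    using mult_left_mono[of "ln (t / d)" a d] d by (simp add: a_def)
  moreover have "(d / t) powr (- d) = exp (d * ln (t / d))"
    using d t(1) by (simp add: powr_def ln_div algebra_simps)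
  ultimately show ?thesis
    by (simp add: exp_add[symmetric] t_def)
qed

lemma measure_gibbs_tail_le:
  fixes F :: "'a::euclidean_space \<Rightarrow> ereal"
  assumes no_minf: "\<And>x. F x \<noteq> - \<infinity>" and conv: "ereal_convex F"
    and integ: "integrable lebesgue (gibbs_weight F)" and Zpos: "gibbs_Z F > 0"
    and c: "F xs = ereal c" and \<delta>: "0 < \<delta>" "\<delta> < 1"
  shows "measure (gibbs F) {x. ereal (real DIM('a) + sqrt (2 * real DIM('a) * ln (1 / \<delta>)) + ln (1 / \<delta>))
    \<le> F x - ereal c} \<le> \<delta>"
proof -
  define d where "d = real DIM('a)"
  define L where "L = ln (1 / \<delta>)"
  define t where "t = d + sqrt (2 * d * L) + L"
  define l where "l = 1 - d / t"
  have d: "0 < d" by (simp add: d_def)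
  have L: "0 < L" using \<delta> by (simp add: L_def)
  have "d < t" using d L by (simp add: t_def add_nonneg_pos)
  then have l: "0 < l" "l < 1" "1 - l = d / t" "l * t = t - d"
    using d by (simp_all add: l_def field_simps)
  have "borel_measurable (gibbs F) = (borel_measurable lebesgue :: ('a \<Rightarrow> ennreal) set)"
    by (rule measurable_cong_sets) (simp_all add: gibbs_def)
  then have tilt_meas: "exp_tilt l F c \<in> borel_measurable (gibbs F)"
    using exp_tilt_measurable[OF no_minf borel_measurable_integrable[OF integ]] by simp
  have "emeasure (gibbs F) {x. ereal t \<le> F x - ereal c}
      \<le> (\<integral>\<^sup>+x. exp_tilt l F c x \<partial>gibbs F) * ennreal (exp (- l * t))"
    using tilt_meas l by (intro emeasure_le_exp_tilt_moment) auto
  also have "\<dots> \<le> ennreal ((1 - l) powr - d) * ennreal (exp (- l * t))"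
    using nn_integral_gibbs_exp_tilt_le[OF no_minf conv integ Zpos c l(1,2)]
    by (intro mult_right_mono) (auto simp: d_def)
  also have "\<dots> = ennreal ((d / t) powr (- d) * exp (- (t - d)))"
    using l by (simp add: ennreal_mult'[symmetric])
  also have "\<dots> \<le> ennreal \<delta>"
    using Chernoff_level_bound[OF d less_imp_le[OF L]] \<delta>
    by (intro ennreal_leI) (simp add: t_def L_def ln_div)
  finally show ?thesis
    using \<delta> by (simp add: measure_def enn2real_leI t_def d_def L_def)
qed

theorem lemma6:
  fixes F :: "'a::euclidean_space \<Rightarrow> ereal" and xs :: 'a
  assumes no_minf: "\<And>x. F x \<noteq> - \<infinity>"
    and conv: "ereal_convex F"
    and integ: "integrable lebesgue (gibbs_weight F)"
    and Zpos: "gibbs_Z F > 0"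
    and min: "\<And>x. F xs \<le> F x"
  shows "(\<forall>l::real. 0 < l \<and> l < 1 \<longrightarrow>
            (\<integral>\<^sup>+ x. exp_tilt l F (real_of_ereal (F xs)) x \<partial>gibbs F)
              \<le> ennreal ((1 - l) powr (- real DIM('a))))
       \<and> (\<forall>\<delta>::real. 0 < \<delta> \<and> \<delta> < 1 \<longrightarrow>
            measure (gibbs F)
              {x. F x - F xs \<ge> ereal (real DIM('a) + sqrt (2 * real DIM('a) * ln (1 / \<delta>)) + ln (1 / \<delta>))}
              \<le> \<delta>)"
proof -
  have "F xs \<noteq> \<infinity>"
  proof
    assume "F xs = \<infinity>"
    then have "gibbs_weight F = (\<lambda>_. 0)"
      using min by (auto simp: gibbs_weight_def fun_eq_iff top_unique)
    with Zpos show False by (simp add: gibbs_Z_def)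
  qed
  with no_minf obtain c where c: "F xs = ereal c" by (cases "F xs") auto
  show ?thesis
    using nn_integral_gibbs_exp_tilt_le[OF no_minf conv integ Zpos c]
      measure_gibbs_tail_le[OF no_minf conv integ Zpos c] by (simp add: c)
qed

end
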